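(* Assume the law of excluded middle. Then for all $\alpha,\beta\in\mathrm{ord}$ we have $\alpha\le\beta$ or $\beta<\alpha$. Moreover, if $\beta<\alpha$, then there exists $i\in I_\alpha$ such that $\beta\le\alpha_i$.
   Context: Let $\mathfrak F$ be a set of index sets such that: $\mathbb N$ and each $\mathbb N_k=\{n\in\mathbb N:n<k\}$ ($k\ge 0$) belong to $\mathfrak F$; every finitely enumerated subset of an element of $\mathfrak F$ is isomorphic to an element of $\mathfrak F$; for $J\in\mathfrak F$ the set of finitely enumerated subsets of $J$ is isomorphic to an element of $\mathfrak F$; $\mathfrak F$ is stable under disjoint unions indexed by elements of $\mathfrak F$. A finitely enumerated subset of $A$ is one given by a map $\mathbb N_k\to A$; write $F\subseteq_f I$. The set $\mathrm{ord}$ is inductively generated by $\underline 0$ and, for every family $(\alpha_i)_{i\in I}$ with $I\in\mathfrak F$, $\alpha_i\in\mathrm{ord}$, an element $\mathrm S(\alpha_i)_{i\in I}$; for such $\alpha$, $I_\alpha=I$ and $\alpha_i$ are its definitional subordinals; $I_{\underline 0}=\emptyset$. For a finite list $F$ in $I_\alpha$, $\alpha_F$ is the list of the $\alpha_i$, $i\in F$. Relations between an element and a nonempty finite list, by simultaneous induction: $\alpha\le\beta^1,\dots,\beta^m$ means $\alpha_i<\beta^1,\dots,\beta^m$ for all $i\in I_\alpha$; $\alpha<\beta^1,\dots,\beta^m$ means there exist $F_1\subseteq_f I_{\beta^1},\dots,F_m\subseteq_f I_{\beta^m}$, not all empty, with $\alpha\le\beta^1_{F_1},\dots,\beta^m_{F_m}$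 (concatenated list). $\alpha\le\beta$ and $\alpha<\beta$ are the case $m=1$. *)

theory Defs
  imports Main "HOL-Library.Equipollence"
begin

text \<open>Index sets are subsets of a fixed ambient type 'i.
  A node carries its index set I and a family f; only f on I matters, and we
  normalise f to Zero outside I in the well-formedness predicate.\<close>

datatype 'i ord = Zero | Sup "'i set" "'i \<Rightarrow> 'i ord"

fun idx :: "'i ord \<Rightarrow> 'i set" where
  "idx Zero = {}"
| "idx (Sup I f) = I"

fun sub :: "'i ord \<Rightarrow> 'i \<Rightarrow> 'i ord" where
  "sub Zero i = Zero"
| "sub (Sup I f) i = f i"

inductive_set ordF :: "'i set set \<Rightarrow> 'i ord set" for FF :: "'i set set" where
  zero: "Zero \<in> ordF FF"
| sup: "\<lbrakk>I \<in> FF; \<forall>i\<in>I. f i \<in> ordF FF; \<forall>i. i \<notin> I \<longrightarrow> f i = Zero\<rbrakk>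
        \<Longrightarrow> Sup I f \<in> ordF FF"

text \<open>Assumptions on the family of index sets (up to isomorphism = bijection).
  A finitely enumerated subset of A is a list of elements of A.\<close>
definition index_family :: "'i set set \<Rightarrow> bool" where
  "index_family FF \<longleftrightarrow>
     (\<exists>I\<in>FF. I \<approx> (UNIV :: nat set))
   \<and> (\<forall>k::nat. \<exists>I\<in>FF. I \<approx> {n. n < k})
   \<and> (\<forall>J\<in>FF. \<forall>F. set F \<subseteq> J \<longrightarrow> (\<exists>I\<in>FF. set F \<approx> I))
   \<and> (\<forall>J\<in>FF. \<exists>I\<in>FF. {F. set F \<subseteq> J} \<approx> I)
   \<and> (\<forall>J\<in>FF. \<forall>K. (\<forall>j\<in>J. K j \<in> FF) \<longrightarrow> (\<exists>I\<in>FF. Sigma J K \<approx> I))"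

definition subl :: "'i ord \<Rightarrow> 'i list \<Rightarrow> 'i ord list" where
  "subl a F = map (sub a) F"

inductive ord_le :: "'i ord \<Rightarrow> 'i ord list \<Rightarrow> bool"
  and ord_lt :: "'i ord \<Rightarrow> 'i ord list \<Rightarrow> bool" where
  le_intro: "\<lbrakk>bs \<noteq> []; \<forall>i\<in>idx a. ord_lt (sub a i) bs\<rbrakk> \<Longrightarrow> ord_le a bs"
| lt_intro: "\<lbrakk>bs \<noteq> []; length Fs = length bs;
              \<forall>j<length bs. set (Fs ! j) \<subseteq> idx (bs ! j);
              concat Fs \<noteq> [];
              ord_le a (concat (map2 subl bs Fs))\<rbrakk> \<Longrightarrow> ord_lt a bs"

end

theory Submission
  imports Defs
begin

text \<open>
  Comparison with a list reduces to comparison with single trees: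
  \<open>\<alpha> \<le> \<beta>\<^sup>1, \<dots>, \<beta>\<^sup>m\<close> holds iff \<open>\<alpha> \<le> \<beta>\<^sup>j\<close> for some \<open>j\<close>. For single trees \<open>\<le>\<close> is the
  simulation preorder (every child of \<open>\<alpha>\<close> lies below some child of \<open>\<beta>\<close>), and
  \<open>\<beta> < \<alpha>\<close> means that \<open>\<beta>\<close> lies below some child of \<open>\<alpha>\<close>. The reduction needs a
  greatest element among \<open>\<beta>\<^sup>1, \<dots>, \<beta>\<^sup>m\<close>, which exists because the simulation
  preorder is total. Totality in the sharper form \<open>\<alpha> \<le> \<beta>\<close> or \<open>\<beta> \<le> \<alpha>\<^sub>i\<close> for some
  \<open>i\<close> is proved by induction on \<open>\<alpha>\<close>, using excluded middle: if \<open>\<alpha> \<le> \<beta>\<close> fails,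
  some child \<open>\<alpha>\<^sub>i\<close> lies below no child \<open>\<beta>\<^sub>k\<close>, so by induction every \<open>\<beta>\<^sub>k\<close>
  lies below a child of \<open>\<alpha>\<^sub>i\<close>, i.e. \<open>\<beta> \<le> \<alpha>\<^sub>i\<close>.
\<close>

inductive tree_le :: "'i ord \<Rightarrow> 'i ord \<Rightarrow> bool" where
  "(\<forall>i\<in>idx a. \<exists>k\<in>idx b. tree_le (sub a i) (sub b k)) \<Longrightarrow> tree_le a b"

lemma tree_le_iff: "tree_le a b \<longleftrightarrow> (\<forall>i\<in>idx a. \<exists>k\<in>idx b. tree_le (sub a i) (sub b k))"
  by (subst tree_le.simps) auto

lemma tree_le_Zero [simp]: "tree_le Zero b"
  by (subst tree_le_iff) simp

lemma tree_le_Sup: "tree_le (Sup I f) b \<longleftrightarrow> (\<forall>i\<in>I. \<exists>k\<in>idx b. tree_le (f i) (sub b k))"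
  by (simp add: tree_le_iff[of "Sup I f"])

lemma tree_le_refl: "tree_le a a"
  by (induction a) (auto simp: tree_le_Sup)

lemma tree_le_trans: "tree_le a b \<Longrightarrow> tree_le b c \<Longrightarrow> tree_le a c"
proof (induction a arbitrary: b c)
  case Zero
  then show ?case by simp
next
  case (Sup I f)
  show ?case unfolding tree_le_iff[of "Sup I f" c]
  proof
    fix i assume "i \<in> idx (Sup I f)"
    with Sup.prems(1) obtain k where k: "k \<in> idx b" "tree_le (f i) (sub b k)"
      by (auto simp: tree_le_Sup)
    with Sup.prems(2) obtain l where l: "l \<in> idx c" "tree_le (sub b k) (sub c l)"
      by (auto simp: tree_le_iff[of b c])
    from Sup.IH[OF rangeI k(2) l(2)] l(1)
    show "\<exists>l\<in>idx c. tree_le (sub (Sup I f) i) (sub c l)" by auto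
  qed
qed

lemma tree_le_sub: "i \<in> idx a \<Longrightarrow> tree_le (sub a i) a"
proof (induction a arbitrary: i)
  case Zero
  then show ?case by simp
next
  case (Sup I f)
  then show ?case
    by (subst tree_le_iff) (auto intro: Sup.IH[OF rangeI])
qed

lemma tree_le_or_le_sub: "tree_le a b \<or> (\<exists>i\<in>idx a. tree_le b (sub a i))"
proof (induction a arbitrary: b)
  case Zero
  then show ?case by simp
next
  case (Sup I f)
  show ?case
  proof (cases "tree_le (Sup I f) b")
    case False
    then obtain i where i: "i \<in> I" and below_none: "\<forall>k\<in>idx b. \<not> tree_le (f i) (sub b k)"
      by (auto simp: tree_le_Sup)
    have "\<forall>k\<in>idx b. \<exists>l\<in>idx (f i). tree_le (sub b k) (sub (f i) l)"
      using Sup.IH[OF rangeI, of i] below_none by blast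
    then have "tree_le b (f i)"
      by (simp add: tree_le_iff[of b])
    with i show ?thesis by auto
  qed simp
qed

lemma tree_le_linear: "tree_le a b \<or> tree_le b a"
proof (cases "tree_le a b")
  case False
  then obtain i where "i \<in> idx a" "tree_le b (sub a i)"
    using tree_le_or_le_sub[of a b] by blast
  then show ?thesis
    using tree_le_sub tree_le_trans by metis
qed simp

lemma tree_le_greatest_exists:
  "finite A \<Longrightarrow> A \<noteq> {} \<Longrightarrow> \<exists>m\<in>A. \<forall>d\<in>A. tree_le d m"
proof (induction A rule: finite_ne_induct)
  case (singleton x)
  then show ?case by (simp add: tree_le_refl)
next
  case (insert x A)
  then obtain m where "m \<in> A" "\<forall>d\<in>A. tree_le d m" by blast
  then show ?case
    using tree_le_linear[of x m] tree_le_refl[of x] tree_le_trans by (metis insert_iff)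
qed

lemma concat_map2_subl_single:
  assumes "j < length cs"
  shows "concat (map2 subl cs (replicate j [] @ [k] # replicate (length cs - Suc j) []))
         = [sub (cs ! j) k]"
proof -
  have cs: "cs = take j cs @ cs ! j # drop (Suc j) cs"
    using assms by (simp add: id_take_nth_drop)
  show ?thesis
    using assms
    by (subst cs) (simp add: zip_append1 subl_def zip_replicate2 comp_def map_replicate_const)
qed

lemma ord_lt_single_childI:
  assumes "j < length cs" "k \<in> idx (cs ! j)" "ord_le x [sub (cs ! j) k]"
  shows "ord_lt x cs"
proof -
  define Fs where "Fs = replicate j [] @ [k] # replicate (length cs - Suc j) []"
  have len: "length Fs = length cs"
    using assms(1) by (simp add: Fs_def)
  have nth: "Fs ! l = (if l = j then [k] else [])" if "l < length cs" for l
    using that by (simp add: Fs_def nth_append)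
  have "\<forall>l<length cs. set (Fs ! l) \<subseteq> idx (cs ! l)"
    using assms(2) by (auto simp: nth)
  moreover have "concat Fs \<noteq> []"
    by (simp add: Fs_def)
  moreover have "concat (map2 subl cs Fs) = [sub (cs ! j) k]"
    using concat_map2_subl_single[OF assms(1)] by (simp add: Fs_def)
  ultimately show ?thesis
    using assms(1,3) len by (auto intro: lt_intro)
qed

lemma set_concat_map2_subl:
  assumes "length Fs = length cs" "\<forall>j<length cs. set (Fs ! j) \<subseteq> idx (cs ! j)"
  shows "set (concat (map2 subl cs Fs)) \<subseteq> (\<Union>c\<in>set cs. sub c ` idx c)"
  using assms by (fastforce simp: set_zip subl_def)

lemma ord_ltE_children:
  assumes "ord_lt x cs"
  obtains ds where "cs \<noteq> []" "ord_le x ds" "set ds \<subseteq> (\<Union>c\<in>set cs. sub c ` idx c)"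
  using assms set_concat_map2_subl by (cases rule: ord_lt.cases) blast

text \<open>Once \<open>ord_le x\<close> is known to reduce to \<open>tree_le\<close>, so does \<open>ord_lt x\<close>; the two
  characterisations are then proved together by induction on \<open>x\<close>.\<close>

lemma ord_lt_iff_if_ord_le_iff:
  assumes le_iff: "\<And>ds. ord_le x ds \<longleftrightarrow> ds \<noteq> [] \<and> (\<exists>d\<in>set ds. tree_le x d)"
  shows "ord_lt x cs \<longleftrightarrow> cs \<noteq> [] \<and> (\<exists>c\<in>set cs. \<exists>k\<in>idx c. tree_le x (sub c k))"
proof
  assume "ord_lt x cs"
  then obtain ds where "cs \<noteq> []" "ord_le x ds" "set ds \<subseteq> (\<Union>c\<in>set cs. sub c ` idx c)"
    by (rule ord_ltE_children)
  moreover obtain d where "d \<in> set ds" "tree_le x d"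
    using le_iff \<open>ord_le x ds\<close> by auto
  ultimately show "cs \<noteq> [] \<and> (\<exists>c\<in>set cs. \<exists>k\<in>idx c. tree_le x (sub c k))"
    by blast
next
  assume "cs \<noteq> [] \<and> (\<exists>c\<in>set cs. \<exists>k\<in>idx c. tree_le x (sub c k))"
  then obtain j k where "j < length cs" "k \<in> idx (cs ! j)" "tree_le x (sub (cs ! j) k)"
    by (metis in_set_conv_nth)
  moreover from this(3) have "ord_le x [sub (cs ! j) k]"
    by (simp add: le_iff)
  ultimately show "ord_lt x cs"
    by (blast intro: ord_lt_single_childI)
qed

lemma ord_le_iff_tree_le: "ord_le x ds \<longleftrightarrow> ds \<noteq> [] \<and> (\<exists>d\<in>set ds. tree_le x d)"
proof (induction x arbitrary: ds)
  case Zero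
  then show ?case
    by (subst ord_le.simps) (auto simp: neq_Nil_conv)
next
  case (Sup I f)
  have lt_iff: "ord_lt (f i) cs \<longleftrightarrow> cs \<noteq> [] \<and> (\<exists>c\<in>set cs. \<exists>k\<in>idx c. tree_le (f i) (sub c k))"
    for i cs
    by (rule ord_lt_iff_if_ord_le_iff) (rule Sup.IH[OF rangeI])
  have "ord_le (Sup I f) ds \<longleftrightarrow>
          ds \<noteq> [] \<and> (\<forall>i\<in>I. \<exists>c\<in>set ds. \<exists>k\<in>idx c. tree_le (f i) (sub c k))"
    by (subst ord_le.simps) (auto simp: lt_iff)
  also have "\<dots> \<longleftrightarrow> ds \<noteq> [] \<and> (\<exists>d\<in>set ds. tree_le (Sup I f) d)"
  proof
    assume below_children: "ds \<noteq> [] \<and> (\<forall>i\<in>I. \<exists>c\<in>set ds. \<exists>k\<in>idx c. tree_le (f i) (sub c k))"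
    then obtain m where m: "m \<in> set ds" "\<forall>d\<in>set ds. tree_le d m"
      using tree_le_greatest_exists[of "set ds"] by auto
    have "\<exists>l\<in>idx m. tree_le (f i) (sub m l)" if "i \<in> I" for i
    proof -
      obtain c k where "c \<in> set ds" "k \<in> idx c" "tree_le (f i) (sub c k)"
        using below_children \<open>i \<in> I\<close> by blast
      with m(2) show ?thesis
        by (meson tree_le_iff tree_le_trans)
    qed
    then have "tree_le (Sup I f) m"
      by (simp add: tree_le_Sup)
    with below_children m(1) show "ds \<noteq> [] \<and> (\<exists>d\<in>set ds. tree_le (Sup I f) d)"
      by blast
  qed (fastforce simp: tree_le_Sup)
  finally show ?case .
qed

lemma ord_lt_iff_tree_le:
  "ord_lt x cs \<longleftrightarrow> cs \<noteq> [] \<and> (\<exists>c\<in>set cs. \<exists>k\<in>idx c. tree_le x (sub c k))"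
  by (rule ord_lt_iff_if_ord_le_iff) (rule ord_le_iff_tree_le)

theorem proposition3p19:
  fixes FF :: "'i set set"
  assumes "index_family FF"
  shows "\<forall>a\<in>ordF FF. \<forall>b\<in>ordF FF.
           (ord_le a [b] \<or> ord_lt b [a])
         \<and> (ord_lt b [a] \<longrightarrow> (\<exists>i\<in>idx a. ord_le b [sub a i]))"
  using tree_le_or_le_sub by (auto simp: ord_le_iff_tree_le ord_lt_iff_tree_le)

end
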